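(* For every integer $g\ge1$, $$\sum_{\mathbf d\in\mathbb N^\infty,\ |\mathbf d|=g}\Gamma(\|\mathbf d\|+2g-1)\,\frac{(-1)^{\|\mathbf d\|}}{\mathbf d!\,\prod_{i\ge1}\big((2i+1)4^i\big)^{d_i}}=-\frac{B_{2g}}{2g}.$$
   Context: $\mathbb N^\infty$ is the set of sequences $\mathbf d=(d_1,d_2,\dots)$ of nonnegative integers, almost all zero; $|\mathbf d|=\sum_i id_i$, $\|\mathbf d\|=\sum_id_i$, $\mathbf d!=\prod_id_i!$. $B_n$ are the Bernoulli numbers, $\frac{t}{e^t-1}=\sum_nB_n\frac{t^n}{n!}$. *)

theory Defs
  imports "HOL-Analysis.Analysis" "HOL-Computational_Algebra.Formal_Power_Series"
begin

definition bernoulli_gf :: "real fps" where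
  "bernoulli_gf = fps_X / (fps_exp 1 - 1)"

definition bernoulli :: "nat \<Rightarrow> real" where
  "bernoulli n = fact n * fps_nth bernoulli_gf n"

text \<open>Elements d of N^infinity, d = (d_1, d_2, ...), represented as functions nat => nat
  with d 0 = 0 (index 0 unused) and finite support.\<close>
definition Ninf :: "(nat \<Rightarrow> nat) set" where
  "Ninf = {d. d 0 = 0 \<and> finite {i. d i \<noteq> 0}}"

definition wt :: "(nat \<Rightarrow> nat) \<Rightarrow> nat" where
  "wt d = (\<Sum>i\<in>{i. d i \<noteq> 0}. i * d i)"

definition len :: "(nat \<Rightarrow> nat) \<Rightarrow> nat" where
  "len d = (\<Sum>i\<in>{i. d i \<noteq> 0}. d i)"

definition dfact :: "(nat \<Rightarrow> nat) \<Rightarrow> nat" where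
  "dfact d = (\<Prod>i\<in>{i. d i \<noteq> 0}. fact (d i))"

end

theory Submission
  imports Defs
begin

text \<open>With \<open>A(t) = 1 + \<Sum>\<^sub>i t^i / ((2i+1) 4^i)\<close>, the multinomial expansion of \<open>A^(-m)\<close>
  shows that the left-hand side equals \<open>(2g-2)! [t^g] A(t)^(-(2g-1))\<close>. As \<open>A(4x^2) = artanh(x)/x\<close>,
  this is \<open>(2g-2)! 4^(-g) [x^(2g)] (x / artanh x)^(2g-1)\<close>, and Lagrange inversion for the
  substitution \<open>x = tanh y\<close> turns the coefficient into \<open>[y^(2g)] (C - y C')\<close> with
  \<open>C(y) = y coth y = \<Sum>\<^sub>n 4^n B\<^sub>2\<^sub>n y^(2n) / (2n)!\<close>.\<close>

no_notation vec_nth (infixl "$" 90)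
notation fps_nth (infixl "$" 75)

subsection \<open>Lagrange inversion\<close>

lemma fps_X_mult_deriv_nth: "(fps_X * fps_deriv f) $ n = of_nat n * f $ n"
  for f :: "'a::comm_ring_1 fps"
  by (cases n) (simp_all add: mult.commute)

lemma fps_deriv_inverse_power:
  fixes a :: "'a::field fps"
  assumes "a $ 0 \<noteq> 0"
  shows "fps_deriv (inverse a ^ m) = - of_nat m * fps_deriv a * inverse a ^ Suc m"
proof (cases m)
  case (Suc n)
  then show ?thesis
    using fps_deriv_power'[of "inverse a" m]
    by (simp add: fps_inverse_deriv[OF assms] power2_eq_square algebra_simps)
qed simp

lemma lagrange_kernel_nth:
  fixes r :: "'a::field_char_0 fps"
  assumes r0: "r $ 0 \<noteq> 0"
  shows "(inverse r ^ Suc m * (r + fps_X * fps_deriv r)) $ m = (if m = 0 then 1 else 0)"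
proof (cases "m = 0")
  case True
  then show ?thesis using r0 by simp
next
  case False
  define V where "V = inverse r"
  have "V ^ Suc m * (r + fps_X * fps_deriv r) = V ^ m * (V * r) + fps_X * fps_deriv r * V ^ Suc m"
    by (simp add: algebra_simps)
  also have "V * r = 1" using r0 by (simp add: V_def inverse_mult_eq_1)
  finally have split: "V ^ Suc m * (r + fps_X * fps_deriv r) = V ^ m + fps_X * fps_deriv r * V ^ Suc m"
    by simp
  have "of_nat m * (fps_X * fps_deriv r * V ^ Suc m) = - (fps_X * fps_deriv (V ^ m))"
    by (simp only: V_def fps_deriv_inverse_power[OF r0]) (simp add: algebra_simps)
  from arg_cong[OF this, of "\<lambda>f. f $ m"]
  have "of_nat m * (fps_X * fps_deriv r * V ^ Suc m) $ m = of_nat m * - (V ^ m) $ m"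
    by (simp only: fps_of_nat[symmetric] fps_mult_left_const_nth fps_neg_nth fps_X_mult_deriv_nth
        mult_minus_right)
  then have "(fps_X * fps_deriv r * V ^ Suc m) $ m = - (V ^ m) $ m"
    using False by (subst (asm) mult_left_cancel) auto
  then show ?thesis using False split by (simp add: V_def)
qed

lemma fps_lagrange_inversion:
  fixes r S :: "'a::field_char_0 fps"
  assumes r0: "r $ 0 \<noteq> 0"
  shows "((S oo (fps_X * r)) * (inverse r ^ Suc n * (r + fps_X * fps_deriv r))) $ n = S $ n"
proof -
  define F where "F = fps_X * r"
  define Q where "Q = inverse r ^ Suc n * (r + fps_X * fps_deriv r)"
  define P where "P = (\<Sum>i=0..n. fps_const (S $ i) * F ^ i)"
  have F_power: "F ^ i = fps_X ^ i * r ^ i" for i by (simp add: F_def power_mult_distrib)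
  have "(S oo F) $ m = P $ m" if "m \<le> n" for m
  proof -
    have "(S oo F) $ m = (\<Sum>i=0..m. S $ i * (F ^ i $ m))" by (rule fps_compose_nth)
    also have "\<dots> = (\<Sum>i=0..n. S $ i * (F ^ i $ m))"
      by (rule sum.mono_neutral_left) (use that in \<open>auto simp: F_power fps_X_power_mult_nth\<close>)
    also have "\<dots> = P $ m" by (simp add: P_def fps_sum_nth)
    finally show ?thesis .
  qed
  then have "((S oo F) * Q) $ n = (P * Q) $ n" by (simp add: fps_mult_nth)
  also have "\<dots> = (\<Sum>i=0..n. S $ i * (F ^ i * Q) $ n)"
    by (simp add: P_def sum_distrib_right fps_sum_nth mult.assoc)
  also have "\<dots> = (\<Sum>i=0..n. S $ i * (if i = n then 1 else 0))"
  proof (rule sum.cong[OF refl])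
    fix i assume i: "i \<in> {0..n}"
    have "inverse r ^ Suc n = inverse r ^ i * inverse r ^ Suc (n - i)"
      using i by (simp add: power_add[symmetric] Suc_diff_le)
    moreover have "r ^ i * inverse r ^ i = 1"
      using r0 by (simp add: power_mult_distrib[symmetric] inverse_mult_eq_1')
    ultimately have cancel: "r ^ i * inverse r ^ Suc n = inverse r ^ Suc (n - i)"
      by (metis mult.assoc mult_1)
    have "(F ^ i * Q) $ n = (r ^ i * Q) $ (n - i)"
      using i by (simp add: F_power mult.assoc fps_X_power_mult_nth)
    also have "\<dots> = (inverse r ^ Suc (n - i) * (r + fps_X * fps_deriv r)) $ (n - i)"
      unfolding Q_def mult.assoc[symmetric] cancel ..
    also have "\<dots> = (if i = n then 1 else 0)"
      using lagrange_kernel_nth[OF r0, of "n - i"] i by auto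
    finally show "S $ i * (F ^ i * Q) $ n = S $ i * (if i = n then 1 else 0)" by simp
  qed
  also have "\<dots> = S $ n" by (simp add: if_distrib cong: if_cong)
  finally show ?thesis by (simp add: F_def Q_def)
qed

subsection \<open>Coefficients of inverse powers of \<open>1 + \<Sum>\<^sub>i a\<^sub>i t^i\<close>\<close>

abbreviation supp :: "(nat \<Rightarrow> nat) \<Rightarrow> nat set" where
  "supp d \<equiv> {i. d i \<noteq> 0}"

definition Ninf_wt :: "nat \<Rightarrow> (nat \<Rightarrow> nat) set" where
  "Ninf_wt k = {d \<in> Ninf. wt d = k}"

definition incr :: "(nat \<Rightarrow> nat) \<Rightarrow> nat \<Rightarrow> nat \<Rightarrow> nat" where
  "incr d i = d(i := Suc (d i))"

definition exp_monomial :: "(nat \<Rightarrow> 'a::field_char_0) \<Rightarrow> (nat \<Rightarrow> nat) \<Rightarrow> 'a" where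
  "exp_monomial a d = (\<Prod>j\<in>supp d. a j ^ d j / fact (d j))"

definition inv_power_term :: "(nat \<Rightarrow> 'a::field_char_0) \<Rightarrow> nat \<Rightarrow> (nat \<Rightarrow> nat) \<Rightarrow> 'a" where
  "inv_power_term a m d = (-1) ^ len d * pochhammer (of_nat m) (len d) * exp_monomial a d"

definition fps_1_plus :: "(nat \<Rightarrow> 'a::{zero,one}) \<Rightarrow> 'a fps" where
  "fps_1_plus a = Abs_fps (\<lambda>k. if k = 0 then 1 else a k)"

lemma wt_eq_sum_superset:
  "d \<in> Ninf \<Longrightarrow> finite S \<Longrightarrow> supp d \<subseteq> S \<Longrightarrow> wt d = (\<Sum>j\<in>S. j * d j)"
  unfolding wt_def by (rule sum.mono_neutral_left) (auto simp: Ninf_def)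

lemma len_eq_sum_superset:
  "d \<in> Ninf \<Longrightarrow> finite S \<Longrightarrow> supp d \<subseteq> S \<Longrightarrow> len d = (\<Sum>j\<in>S. d j)"
  unfolding len_def by (rule sum.mono_neutral_left) (auto simp: Ninf_def)

lemma exp_monomial_eq_prod_superset:
  "d \<in> Ninf \<Longrightarrow> finite S \<Longrightarrow> supp d \<subseteq> S \<Longrightarrow> exp_monomial a d = (\<Prod>j\<in>S. a j ^ d j / fact (d j))"
  unfolding exp_monomial_def by (rule prod.mono_neutral_left) (auto simp: Ninf_def)

lemma incr_in_Ninf:
  assumes "d \<in> Ninf" "1 \<le> i"
  shows "incr d i \<in> Ninf"
proof -
  have "supp (incr d i) \<subseteq> insert i (supp d)" by (auto simp: incr_def)
  then have "finite (supp (incr d i))"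
    using assms(1) by (auto simp: Ninf_def intro: finite_subset)
  then show ?thesis using assms by (simp add: Ninf_def incr_def)
qed

lemma inj_on_incr: "inj_on (\<lambda>d. incr d i) A"
proof
  fix x y assume "incr x i = incr y i"
  then have "(incr x i)(i := x i) = (incr y i)(i := y i)"
    by (metis Suc_inject fun_upd_same incr_def)
  then show "x = y" by (simp add: incr_def)
qed

lemma
  assumes d: "d \<in> Ninf" and i: "1 \<le> i"
  shows wt_incr: "wt (incr d i) = wt d + i"
    and len_incr: "len (incr d i) = len d + 1"
    and exp_monomial_incr: "of_nat (Suc (d i)) * exp_monomial a (incr d i) = a i * exp_monomial a d"
proof -
  define S where "S = insert i (supp d)"
  have S: "finite S" "i \<in> S" using d by (auto simp: S_def Ninf_def)
  have supp: "supp d \<subseteq> S" "supp (incr d i) \<subseteq> S" by (auto simp: S_def incr_def)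
  note incr = incr_in_Ninf[OF d i]
  have away: "\<And>j. j \<in> S - {i} \<Longrightarrow> incr d i j = d j" by (auto simp: incr_def)
  show "wt (incr d i) = wt d + i"
    unfolding wt_eq_sum_superset[OF incr S(1) supp(2)] wt_eq_sum_superset[OF d S(1) supp(1)]
      sum.remove[OF S] by (simp add: away incr_def)
  show "len (incr d i) = len d + 1"
    unfolding len_eq_sum_superset[OF incr S(1) supp(2)] len_eq_sum_superset[OF d S(1) supp(1)]
      sum.remove[OF S] by (simp add: away incr_def)
  have coeff: "of_nat (Suc (d i)) * (a i ^ Suc (d i) / fact (Suc (d i))) = a i * (a i ^ d i / fact (d i))"
    by (simp add: divide_simps del: of_nat_Suc)
  have rest: "(\<Prod>j\<in>S - {i}. a j ^ incr d i j / fact (incr d i j)) = (\<Prod>j\<in>S - {i}. a j ^ d j / fact (d j))"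
    by (rule prod.cong) (simp_all add: away)
  have incr_i: "incr d i i = Suc (d i)" by (simp add: incr_def)
  show "of_nat (Suc (d i)) * exp_monomial a (incr d i) = a i * exp_monomial a d"
    unfolding exp_monomial_eq_prod_superset[OF incr S(1) supp(2)]
      exp_monomial_eq_prod_superset[OF d S(1) supp(1)] prod.remove[OF S] rest incr_i
    by (simp only: mult.assoc[symmetric] coeff)
qed

lemma Ninf_wt_bounds:
  assumes "d \<in> Ninf_wt k" "d j \<noteq> 0"
  shows "1 \<le> j" "j \<le> k" "d j \<le> k"
proof -
  have d: "d \<in> Ninf" "wt d = k" using assms by (auto simp: Ninf_wt_def)
  have "j * d j \<le> wt d" unfolding wt_def
    by (rule member_le_sum) (use assms d in \<open>auto simp: Ninf_def\<close>)
  then have jk: "j * d j \<le> k" using d by simp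
  show j1: "1 \<le> j" using assms d by (cases j) (auto simp: Ninf_def)
  show "j \<le> k" using jk assms(2) by (metis le_trans mult.right_neutral mult_le_mono2 less_one not_le)
  show "d j \<le> k" using jk j1 by (metis le_trans mult_1 mult_le_mono1)
qed

lemma finite_Ninf_wt: "finite (Ninf_wt k)"
proof (rule finite_subset)
  show "Ninf_wt k \<subseteq> {f. \<forall>x. (x \<in> {1..k} \<longrightarrow> f x \<in> {0..k}) \<and> (x \<notin> {1..k} \<longrightarrow> f x = 0)}"
  proof clarify
    fix d x assume d: "d \<in> Ninf_wt k"
    show "(x \<in> {1..k} \<longrightarrow> d x \<in> {0..k}) \<and> (x \<notin> {1..k} \<longrightarrow> d x = 0)"
      using Ninf_wt_bounds[OF d, of x] by (cases "d x = 0") auto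
  qed
qed (rule finite_set_of_finite_funs; simp)

lemma Ninf_wt_0: "Ninf_wt 0 = {\<lambda>_. 0}"
proof -
  have "d = (\<lambda>_. 0)" if "d \<in> Ninf_wt 0" for d
    using Ninf_wt_bounds(1,2)[OF that] by fastforce
  moreover have "(\<lambda>_. 0::nat) \<in> Ninf_wt 0" by (simp add: Ninf_wt_def Ninf_def wt_def)
  ultimately show ?thesis by blast
qed

lemma incr_image_Ninf_wt:
  assumes i: "1 \<le> i" "i \<le> k"
  shows "(\<lambda>d. incr d i) ` Ninf_wt (k - i) = {d \<in> Ninf_wt k. d i \<noteq> 0}"
proof
  show "(\<lambda>d. incr d i) ` Ninf_wt (k - i) \<subseteq> {d \<in> Ninf_wt k. d i \<noteq> 0}"
    using i wt_incr incr_in_Ninf by (auto simp: Ninf_wt_def incr_def)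
  show "{d \<in> Ninf_wt k. d i \<noteq> 0} \<subseteq> (\<lambda>d. incr d i) ` Ninf_wt (k - i)"
  proof (rule subsetI, elim CollectE conjE)
    fix d assume d: "d \<in> Ninf_wt k" "d i \<noteq> 0"
    define d' where "d' = d(i := d i - 1)"
    have d_eq: "d = incr d' i" using d(2) by (auto simp: incr_def d'_def)
    have "supp d' \<subseteq> supp d" by (auto simp: d'_def)
    moreover have "finite (supp d)" using d(1) by (simp add: Ninf_wt_def Ninf_def)
    ultimately have "finite (supp d')" by (rule finite_subset)
    moreover have "d' 0 = 0" using d(1) i by (simp add: d'_def Ninf_wt_def Ninf_def)
    ultimately have "d' \<in> Ninf" by (simp add: Ninf_def)
    moreover from this have "wt d = wt d' + i" using wt_incr[OF _ i(1)] d_eq by simp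
    ultimately have "d' \<in> Ninf_wt (k - i)" using d by (auto simp: Ninf_wt_def)
    with d_eq show "d \<in> (\<lambda>d. incr d i) ` Ninf_wt (k - i)" by blast
  qed
qed

lemma inv_power_term_incr:
  assumes "d \<in> Ninf" "1 \<le> i"
  shows "of_nat (Suc (d i)) * inv_power_term a m (incr d i) = - of_nat m * a i * inv_power_term a (Suc m) d"
proof -
  have "of_nat (Suc (d i)) * inv_power_term a m (incr d i)
      = (-1) ^ Suc (len d) * (of_nat m * pochhammer (of_nat m + 1) (len d))
        * (of_nat (Suc (d i)) * exp_monomial a (incr d i))"
    by (simp only: inv_power_term_def len_incr[OF assms] Suc_eq_plus1[symmetric] pochhammer_rec mult_ac)
  also have "\<dots> = - of_nat m * a i * inv_power_term a (Suc m) d"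
    unfolding exp_monomial_incr[OF assms] by (simp add: inv_power_term_def mult_ac add.commute)
  finally show ?thesis .
qed

text \<open>Differentiating \<open>A^(-m)\<close> gives \<open>k [t^k] A^(-m) = -m \<Sum>\<^sub>i i a\<^sub>i [t^(k-i)] A^(-m-1)\<close>; the sums
  over \<open>Ninf_wt k\<close> satisfy the same recursion, by removing one part \<open>i\<close> from each \<open>d\<close>.\<close>

lemma sum_inv_power_term_rec:
  assumes k: "1 \<le> k"
  shows "of_nat k * (\<Sum>d\<in>Ninf_wt k. inv_power_term a m d)
    = - of_nat m * (\<Sum>i=1..k. of_nat i * a i * (\<Sum>d\<in>Ninf_wt (k - i). inv_power_term a (Suc m) d))"
proof -
  have "of_nat k * (\<Sum>d\<in>Ninf_wt k. inv_power_term a m d)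
      = (\<Sum>d\<in>Ninf_wt k. \<Sum>i=1..k. of_nat (i * d i) * inv_power_term a m d)"
    unfolding sum_distrib_left
  proof (rule sum.cong[OF refl])
    fix d assume d: "d \<in> Ninf_wt k"
    have "wt d = (\<Sum>j=1..k. j * d j)"
      by (rule wt_eq_sum_superset) (use d Ninf_wt_bounds(1,2)[OF d] in \<open>auto simp: Ninf_wt_def\<close>)
    then have "k = (\<Sum>j=1..k. j * d j)" using d by (simp add: Ninf_wt_def)
    then show "of_nat k * inv_power_term a m d = (\<Sum>i=1..k. of_nat (i * d i) * inv_power_term a m d)"
      by (metis of_nat_sum sum_distrib_right)
  qed
  also have "\<dots> = (\<Sum>i=1..k. \<Sum>d\<in>Ninf_wt k. of_nat (i * d i) * inv_power_term a m d)"
    by (rule sum.swap)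
  also have "\<dots> = (\<Sum>i=1..k. - of_nat m * (of_nat i * a i * (\<Sum>d\<in>Ninf_wt (k - i). inv_power_term a (Suc m) d)))"
  proof (rule sum.cong[OF refl])
    fix i assume i: "i \<in> {1..k}"
    have "(\<Sum>d\<in>Ninf_wt k. of_nat (i * d i) * inv_power_term a m d)
        = (\<Sum>d\<in>{d \<in> Ninf_wt k. d i \<noteq> 0}. of_nat (i * d i) * inv_power_term a m d)"
      by (rule sum.mono_neutral_right) (auto simp: finite_Ninf_wt)
    also have "\<dots> = (\<Sum>d\<in>Ninf_wt (k - i). of_nat (i * incr d i i) * inv_power_term a m (incr d i))"
    proof -
      have "{d \<in> Ninf_wt k. d i \<noteq> 0} = (\<lambda>d. incr d i) ` Ninf_wt (k - i)"
        using incr_image_Ninf_wt i by auto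
      then show ?thesis by (simp only: sum.reindex[OF inj_on_incr] comp_def)
    qed
    also have "\<dots> = (\<Sum>d\<in>Ninf_wt (k - i). of_nat i * (- of_nat m * a i * inv_power_term a (Suc m) d))"
    proof (rule sum.cong[OF refl])
      fix d assume "d \<in> Ninf_wt (k - i)"
      then have "of_nat (Suc (d i)) * inv_power_term a m (incr d i) = - of_nat m * a i * inv_power_term a (Suc m) d"
        using i by (intro inv_power_term_incr) (auto simp: Ninf_wt_def)
      moreover have "incr d i i = Suc (d i)" by (simp add: incr_def)
      ultimately show "of_nat (i * incr d i i) * inv_power_term a m (incr d i)
          = of_nat i * (- of_nat m * a i * inv_power_term a (Suc m) d)"
        by (simp only: of_nat_mult mult.assoc)
    qed
    finally show "(\<Sum>d\<in>Ninf_wt k. of_nat (i * d i) * inv_power_term a m d)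
        = - of_nat m * (of_nat i * a i * (\<Sum>d\<in>Ninf_wt (k - i). inv_power_term a (Suc m) d))"
      by (simp add: sum_distrib_left algebra_simps)
  qed
  finally show ?thesis by (simp add: sum_distrib_left)
qed

lemma fps_1_plus_inverse_power_rec:
  fixes a :: "nat \<Rightarrow> 'a::field_char_0"
  assumes k: "1 \<le> k"
  shows "of_nat k * (inverse (fps_1_plus a) ^ m) $ k
    = - of_nat m * (\<Sum>i=1..k. of_nat i * a i * (inverse (fps_1_plus a) ^ Suc m) $ (k - i))"
proof -
  define A where "A = fps_1_plus a"
  have A0: "A $ 0 \<noteq> 0" by (simp add: A_def fps_1_plus_def)
  obtain k' where k': "k = Suc k'" using k by (cases k) auto
  have "of_nat k * (inverse A ^ m) $ k = fps_deriv (inverse A ^ m) $ k'"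
    by (simp add: k' mult.commute del: power_Suc)
  also have "\<dots> = - of_nat m * (fps_deriv A * inverse A ^ Suc m) $ k'"
    unfolding fps_deriv_inverse_power[OF A0] by (simp add: fps_of_nat[symmetric] mult.assoc del: power_Suc)
  also have "(fps_deriv A * inverse A ^ Suc m) $ k'
      = (\<Sum>j=0..k'. of_nat (Suc j) * a (Suc j) * (inverse A ^ Suc m) $ (k' - j))"
    by (simp add: fps_mult_nth A_def fps_1_plus_def mult.commute del: power_Suc of_nat_Suc)
  also have "\<dots> = (\<Sum>i=1..k. of_nat i * a i * (inverse A ^ Suc m) $ (k - i))"
    by (simp only: k' One_nat_def sum.shift_bounds_cl_Suc_ivl diff_Suc_Suc)
  finally show ?thesis by (simp add: A_def)
qed

theorem fps_1_plus_inverse_power_nth: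
  fixes a :: "nat \<Rightarrow> 'a::field_char_0"
  shows "(inverse (fps_1_plus a) ^ m) $ k = (\<Sum>d\<in>Ninf_wt k. inv_power_term a m d)"
proof (induction k arbitrary: m rule: less_induct)
  case (less k)
  show ?case
  proof (cases "k = 0")
    case True
    then show ?thesis
      by (simp add: Ninf_wt_0 inv_power_term_def len_def exp_monomial_def fps_1_plus_def
          fps_nth_power_0)
  next
    case False
    then have k: "1 \<le> k" by simp
    have "of_nat k * (inverse (fps_1_plus a) ^ m) $ k = of_nat k * (\<Sum>d\<in>Ninf_wt k. inv_power_term a m d)"
      unfolding fps_1_plus_inverse_power_rec[OF k] sum_inv_power_term_rec[OF k]
      using less k by (intro arg_cong[where f="\<lambda>x. - of_nat m * x"] sum.cong) (auto simp del: power_Suc)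
    then show ?thesis using k by simp
  qed
qed

subsection \<open>The hyperbolic functions as formal power series\<close>

definition artanh_over_X :: "real fps" where
  "artanh_over_X = Abs_fps (\<lambda>n. if even n then 1 / real (n + 1) else 0)"

definition fps_artanh :: "real fps" where
  "fps_artanh = fps_X * artanh_over_X"

lemma fps_artanh_nth_0: "fps_artanh $ 0 = 0"
  by (simp add: fps_artanh_def)

lemma fps_deriv_fps_artanh: "(1 - fps_X ^ 2) * fps_deriv fps_artanh = 1"
proof (rule fps_ext)
  fix n
  have "fps_deriv fps_artanh $ n = (real n + 1) * artanh_over_X $ n" for n
    by (simp add: fps_artanh_def algebra_simps)
  then have deriv_nth: "fps_deriv fps_artanh $ n = (if even n then 1 else 0)" for n
    by (simp add: artanh_over_X_def)
  have "((1 - fps_X ^ 2) * fps_deriv fps_artanh) $ n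
      = fps_deriv fps_artanh $ n - (fps_X ^ 2 * fps_deriv fps_artanh) $ n"
    by (simp add: algebra_simps)
  also have "\<dots> = (1::real fps) $ n"
    unfolding fps_X_power_mult_nth deriv_nth by (cases n; cases "n - 1") auto
  finally show "((1 - fps_X ^ 2) * fps_deriv fps_artanh) $ n = (1::real fps) $ n" .
qed

text \<open>Both sides solve \<open>(1 - x^2) Y' = 2 Y\<close>, \<open>Y(0) = 1\<close>.\<close>

lemma fps_exp_2_artanh: "(fps_exp 2 oo fps_artanh) * (1 - fps_X) = 1 + fps_X"
proof -
  define Y where "Y = fps_exp 2 oo fps_artanh"
  define Z where "Z = Y * (1 - fps_X) - (1 + fps_X)"
  have dY: "fps_deriv Y = 2 * Y * fps_deriv fps_artanh"
    unfolding Y_def fps_compose_deriv[OF fps_artanh_nth_0] fps_exp_deriv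
    by (simp add: fps_const_mult_apply_left[symmetric] numeral_fps_const)
  have "(1 + fps_X) * fps_deriv Z
      = 2 * Y * ((1 - fps_X ^ 2) * fps_deriv fps_artanh) - (1 + fps_X) * Y - (1 + fps_X)"
    by (simp add: Z_def dY algebra_simps power2_eq_square)
  also have "\<dots> = 2 * Y - (1 + fps_X) * Y - (1 + fps_X)"
    by (simp only: fps_deriv_fps_artanh mult_1_right)
  also have "\<dots> = Z" by (simp add: Z_def algebra_simps)
  finally have Z_ode: "(1 + fps_X) * fps_deriv Z = Z" .
  have "Z $ n = 0" for n
  proof (induction n)
    case 0
    show ?case by (simp add: Z_def Y_def fps_artanh_nth_0)
  next
    case (Suc n)
    have "((1 + fps_X) * fps_deriv Z) $ n = Z $ n" by (simp add: Z_ode)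
    then have "(real n + 1) * Z $ Suc n = 0" using Suc
      by (cases n) (auto simp: distrib_right algebra_simps)
    then show ?case by (simp add: add_eq_0_iff_both_eq_0)
  qed
  then show ?thesis by (simp add: Z_def Y_def fps_eq_iff)
qed

lemma bernoulli_gf_mult: "bernoulli_gf * (fps_exp 1 - 1) = fps_X"
proof -
  have ne: "fps_exp (1::real) - 1 \<noteq> 0"
    by (metis fps_exp_eq_1_iff one_neq_zero right_minus_eq)
  have "subdegree (fps_exp (1::real) - 1) = 1"
    by (rule subdegreeI) auto
  then show ?thesis unfolding bernoulli_gf_def
    by (intro fps_times_divide_eq[OF ne]) simp
qed

text \<open>\<open>x coth x = 2x / (e^(2x) - 1) + x\<close>.\<close>

definition fps_X_coth :: "real fps" where
  "fps_X_coth = (bernoulli_gf oo (fps_const 2 * fps_X)) + fps_X"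

lemma fps_X_coth_mult: "fps_X_coth * (fps_exp 2 - 1) = fps_X * (fps_exp 2 + 1)"
proof -
  have c0: "(fps_const (2::real) * fps_X) $ 0 = 0" by simp
  have "(bernoulli_gf oo (fps_const 2 * fps_X)) * (fps_exp 2 - 1)
      = (bernoulli_gf oo (fps_const 2 * fps_X)) * ((fps_exp 1 - 1) oo (fps_const 2 * fps_X))"
    by (simp add: fps_compose_sub_distrib)
  also have "\<dots> = (bernoulli_gf * (fps_exp 1 - 1)) oo (fps_const 2 * fps_X)"
    by (rule fps_compose_mult_distrib[OF c0, symmetric])
  also have "\<dots> = fps_const 2 * fps_X" by (simp add: bernoulli_gf_mult)
  finally show ?thesis by (simp add: fps_X_coth_def algebra_simps numeral_fps_const)
qed

lemma fps_X_coth_artanh: "fps_X_coth oo fps_artanh = artanh_over_X"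
proof -
  define Y where "Y = fps_exp 2 oo fps_artanh"
  note F0 = fps_artanh_nth_0
  have coth: "(fps_X_coth oo fps_artanh) * (Y - 1) = fps_artanh * (Y + 1)"
    using arg_cong[OF fps_X_coth_mult, of "\<lambda>f. f oo fps_artanh"]
    by (simp add: fps_compose_mult_distrib[OF F0] fps_compose_sub_distrib
        fps_compose_add_distrib F0 Y_def)
  have Y_minus: "(Y - 1) * (1 - fps_X) = fps_const 2 * fps_X"
    and Y_plus: "(Y + 1) * (1 - fps_X) = fps_const 2"
    using fps_exp_2_artanh by (simp_all add: Y_def algebra_simps numeral_fps_const[symmetric])
  have "(fps_X_coth oo fps_artanh) * (fps_const 2 * fps_X)
      = (fps_X_coth oo fps_artanh) * (Y - 1) * (1 - fps_X)"
    by (simp only: Y_minus mult.assoc)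
  also have "\<dots> = fps_artanh * (Y + 1) * (1 - fps_X)" by (simp only: coth)
  also have "\<dots> = artanh_over_X * (fps_const 2 * fps_X)"
    by (simp only: Y_plus mult.assoc fps_artanh_def) (simp add: algebra_simps)
  finally have "(fps_X_coth oo fps_artanh) * (fps_const 2 * fps_X) = artanh_over_X * (fps_const 2 * fps_X)" .
  moreover have "fps_const (2::real) * fps_X \<noteq> 0"
    by (simp add: fps_const_eq_0_iff)
  ultimately show ?thesis by simp
qed

lemma fps_X_coth_lagrange_numerator:
  "((fps_X_coth - fps_X * fps_deriv fps_X_coth) oo fps_artanh) * fps_deriv fps_artanh
    = artanh_over_X ^ 2"
proof -
  note F0 = fps_artanh_nth_0
  have chain: "fps_deriv artanh_over_X = (fps_deriv fps_X_coth oo fps_artanh) * fps_deriv fps_artanh"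
    using fps_compose_deriv[OF F0, of fps_X_coth] by (simp add: fps_X_coth_artanh)
  have "((fps_X_coth - fps_X * fps_deriv fps_X_coth) oo fps_artanh) * fps_deriv fps_artanh
      = artanh_over_X * fps_deriv fps_artanh
        - fps_artanh * ((fps_deriv fps_X_coth oo fps_artanh) * fps_deriv fps_artanh)"
    by (simp add: fps_compose_sub_distrib fps_compose_mult_distrib[OF F0] F0 fps_X_coth_artanh
        algebra_simps)
  also have "\<dots> = artanh_over_X ^ 2"
    by (simp only: chain[symmetric]) (simp add: fps_artanh_def algebra_simps power2_eq_square)
  finally show ?thesis .
qed

lemma fps_X_coth_lagrange_numerator_nth:
  "(fps_X_coth - fps_X * fps_deriv fps_X_coth) $ n
    = (1 - real n) * (2 ^ n * bernoulli_gf $ n + (if n = 1 then 1 else 0))"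
proof -
  have "(bernoulli_gf oo (fps_const 2 * fps_X)) $ n = 2 ^ n * bernoulli_gf $ n"
    by (simp only: fps_compose_linear) simp
  then show ?thesis by (simp add: fps_X_coth_def algebra_simps)
qed

lemma artanh_over_X_inverse_power_nth:
  assumes "1 \<le> g"
  shows "(inverse artanh_over_X ^ (2*g - 1)) $ (2*g) = (1 - real (2*g)) * 2 ^ (2*g) * bernoulli_gf $ (2*g)"
proof -
  define S where "S = fps_X_coth - fps_X * fps_deriv fps_X_coth"
  define V where "V = inverse artanh_over_X"
  have r0: "artanh_over_X $ 0 \<noteq> 0" by (simp add: artanh_over_X_def)
  have "(S oo fps_artanh) * (V ^ Suc (2*g) * fps_deriv fps_artanh) = artanh_over_X ^ 2 * V ^ Suc (2*g)"
    using fps_X_coth_lagrange_numerator by (simp add: S_def algebra_simps)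
  also have "\<dots> = (artanh_over_X * V) ^ 2 * V ^ (2*g - 1)"
    using assms by (simp add: power_mult_distrib power_add[symmetric])
  also have "artanh_over_X * V = 1"
    using r0 by (simp add: V_def inverse_mult_eq_1')
  finally have "V ^ (2*g - 1) = (S oo fps_artanh) * (V ^ Suc (2*g) * fps_deriv fps_artanh)"
    by simp
  moreover have "fps_deriv fps_artanh = artanh_over_X + fps_X * fps_deriv artanh_over_X"
    by (simp add: fps_artanh_def)
  ultimately have "(V ^ (2*g - 1)) $ (2*g) = S $ (2*g)"
    using fps_lagrange_inversion[OF r0, of S "2*g", folded fps_artanh_def V_def] by simp
  also have "S $ (2*g) = (1 - real (2*g)) * 2 ^ (2*g) * bernoulli_gf $ (2*g)"
    unfolding S_def fps_X_coth_lagrange_numerator_nth using assms by simp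
  finally show ?thesis by (simp only: V_def)
qed

lemma fps_compose_const_X_power2_nth:
  fixes f :: "'a::comm_ring_1 fps"
  shows "(f oo (fps_const c * fps_X ^ 2)) $ n = (if even n then c ^ (n div 2) * f $ (n div 2) else 0)"
proof -
  have "(fps_const c * fps_X ^ 2) ^ i $ n = (if n = 2 * i then c ^ i else 0)" for i
    by (simp add: power_mult_distrib fps_const_power power_mult[symmetric] fps_X_power_nth)
  then have "(f oo (fps_const c * fps_X ^ 2)) $ n = (\<Sum>i=0..n. f $ i * (if n = 2 * i then c ^ i else 0))"
    by (simp add: fps_compose_nth)
  also have "\<dots> = (if even n then c ^ (n div 2) * f $ (n div 2) else 0)"
  proof (cases "even n")
    case True
    have "(\<Sum>i=0..n. f $ i * (if n = 2 * i then c ^ i else 0)) = (\<Sum>i\<in>{n div 2}. f $ i * c ^ i)"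
      by (rule sum.mono_neutral_cong_right) (use True in auto)
    then show ?thesis using True by (simp add: mult.commute)
  next
    case False
    then have "n \<noteq> 2 * i" for i by auto
    then show ?thesis using False by simp
  qed
  finally show ?thesis .
qed

definition artanh_weight :: "nat \<Rightarrow> real" where
  "artanh_weight i = 1 / real ((2*i+1) * 4^i)"

lemma artanh_over_X_eq: "artanh_over_X = fps_1_plus artanh_weight oo (fps_const 4 * fps_X ^ 2)"
proof (rule fps_ext)
  fix n
  have "(4::real) ^ j * artanh_weight j = 1 / real (2*j + 1)" for j
    by (simp add: artanh_weight_def field_simps add_nonneg_eq_0_iff)
  then show "artanh_over_X $ n = (fps_1_plus artanh_weight oo (fps_const 4 * fps_X ^ 2)) $ n"
    by (auto simp: fps_compose_const_X_power2_nth artanh_over_X_def fps_1_plus_def elim!: evenE)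
qed

lemma artanh_over_X_inverse_power_nth_eq:
  "(inverse artanh_over_X ^ m) $ (2*g) = 4 ^ g * (inverse (fps_1_plus artanh_weight) ^ m) $ g"
proof -
  have c0: "(fps_const (4::real) * fps_X ^ 2) $ 0 = 0" by simp
  have a0: "fps_1_plus artanh_weight $ 0 \<noteq> 0" by (simp add: fps_1_plus_def)
  have "inverse artanh_over_X ^ m = (inverse (fps_1_plus artanh_weight) ^ m) oo (fps_const 4 * fps_X ^ 2)"
    unfolding artanh_over_X_eq fps_inverse_compose[OF c0 a0, symmetric] fps_compose_power[OF c0] ..
  then show ?thesis by (simp add: fps_compose_const_X_power2_nth)
qed

lemma summand_eq_inv_power_term:
  assumes "1 \<le> g"
  shows "Gamma (real (len d + 2*g) - 1) * (-1) ^ len d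
            / (real (dfact d) * (\<Prod>i\<in>{i. d i \<noteq> 0}. (real ((2*i+1) * 4^i)) ^ d i))
        = fact (2*g - 2) * inv_power_term artanh_weight (2*g - 1) d"
proof -
  have "real (len d + 2*g) - 1 = 1 + of_nat (2*g - 2 + len d)" using assms by simp
  then have "Gamma (real (len d + 2*g) - 1) = fact (2*g - 2 + len d)"
    by (simp only: Gamma_fact)
  also have "\<dots> = fact (2*g - 2) * pochhammer (1 + of_nat (2*g - 2)) (len d)"
    by (simp only: pochhammer_fact pochhammer_product')
  also have "1 + of_nat (2*g - 2) = (of_nat (2*g - 1) :: real)"
    using assms by simp
  finally have Gamma_eq:
    "Gamma (real (len d + 2*g) - 1) = fact (2*g - 2) * pochhammer (of_nat (2*g - 1)) (len d)" .
  have monomial_eq: "exp_monomial artanh_weight d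
      = 1 / (real (dfact d) * (\<Prod>i\<in>{i. d i \<noteq> 0}. (real ((2*i+1) * 4^i)) ^ d i))"
    unfolding exp_monomial_def dfact_def artanh_weight_def
    by (simp add: prod_dividef prod.distrib power_one_over of_nat_prod)
  show ?thesis unfolding Gamma_eq inv_power_term_def monomial_eq by simp
qed

theorem corollary5p7:
  fixes g :: nat
  assumes "g \<ge> 1"
  shows "(\<Sum>d\<in>{d\<in>Ninf. wt d = g}.
            Gamma (real (len d + 2*g) - 1) * (-1) ^ len d
            / (real (dfact d) * (\<Prod>i\<in>{i. d i \<noteq> 0}. (real ((2*i+1) * 4^i)) ^ d i)))
         = - bernoulli (2*g) / real (2*g)"
proof -
  have "(\<Sum>d\<in>{d\<in>Ninf. wt d = g}.
            Gamma (real (len d + 2*g) - 1) * (-1) ^ len d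
            / (real (dfact d) * (\<Prod>i\<in>{i. d i \<noteq> 0}. (real ((2*i+1) * 4^i)) ^ d i)))
      = fact (2*g - 2) * (\<Sum>d\<in>Ninf_wt g. inv_power_term artanh_weight (2*g - 1) d)"
    unfolding Ninf_wt_def sum_distrib_left
    by (rule sum.cong[OF refl]) (rule summand_eq_inv_power_term[OF assms])
  also have "\<dots> = fact (2*g - 2) * (inverse (fps_1_plus artanh_weight) ^ (2*g - 1)) $ g"
    by (simp add: fps_1_plus_inverse_power_nth)
  also have "\<dots> = fact (2*g - 2) * (1 - real (2*g)) * bernoulli_gf $ (2*g)"
    using artanh_over_X_inverse_power_nth_eq[of "2*g - 1" g]
      artanh_over_X_inverse_power_nth[OF assms]
    by (simp add: power_mult)
  also have "\<dots> = - bernoulli (2*g) / real (2*g)"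
    using assms by (cases g) (simp_all add: bernoulli_def fact_Suc field_simps)
  finally show ?thesis .
qed

end
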